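(* Let $\mu,\nu$ be compactly supported Borel probability measures on $\mathbb{R}^n$ and $(q,t)\in\mathbb{R}^2$ such that $B_{\mu,\nu}$ is differentiable at $(q,t)$; set $\alpha=-\frac{\partial B_{\mu,\nu}(q,t)}{\partial q}$ and $\beta=-\frac{\partial B_{\mu,\nu}(q,t)}{\partial t}$. Then for all $\eta_1,\eta_2>0$, $$\mathcal H^{\alpha q+\beta t+B_{\mu,\nu}(q,t)-\eta_1-\eta_2}\big(E_{\mu,\nu}(\alpha,\beta)\big)\ge 2^{\alpha q+\beta t-\eta_1-\eta_2}\,\mathcal H^{q,t,B_{\mu,\nu}(q,t)}_{\mu,\nu}\big(E_{\mu,\nu}(\alpha,\beta)\big).$$
   Context: $\mathcal H^s$ denotes the $s$-dimensional Hausdorff measure. $B(x,r)$ denotes the closed ball of center $x$ and radius $r$; conventions $0^q=\infty$ for $q\le0$, $0^q=0$ for $q>0$. Centered $\delta$-packings (resp. coverings) of $E$ are countable families of pairwise disjoint closed balls (resp. closed balls covering $E$) $B(x_i,r_i)$ with $x_i\in E$, $0<r_i\le\delta$. For $q,t,s\in\mathbb{R}$: $\overline{\mathcal P}^{q,t,s}_{\mu,\nu,\delta}(E)=\sup\sum_i\mu(B(x_i,r_i))^q\nu(B(x_i,r_i))^t(2r_i)^s$ over centered $\delta$-packings, $\overline{\mathcal P}^{q,t,s}_{\mu,\nu}=\inf_{\delta>0}\overline{\mathcal P}^{q,t,s}_{\mu,\nu,\delta}$, $\mathcal P^{q,t,s}_{\mu,\nu}(E)=\inf\{\sum_i\overline{\mathcal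 P}^{q,t,s}_{\mu,\nu}(E_i):E\subseteq\bigcup_iE_i\}$; $\overline{\mathcal H}^{q,t,s}_{\mu,\nu,\delta}(E)$ is the same sum with infimum over centered $\delta$-coverings, $\overline{\mathcal H}^{q,t,s}_{\mu,\nu}=\sup_{\delta>0}\overline{\mathcal H}^{q,t,s}_{\mu,\nu,\delta}$, $\mathcal H^{q,t,s}_{\mu,\nu}(E)=\sup_{F\subseteq E}\overline{\mathcal H}^{q,t,s}_{\mu,\nu}(F)$. $B^{q,t}_{\mu,\nu}(E)$ is the unique value in $[-\infty,\infty]$ where $s\mapsto\mathcal P^{q,t,s}_{\mu,\nu}(E)$ jumps from $\infty$ (smaller $s$) to $0$ (larger $s$), and $B_{\mu,\nu}(q,t)=B^{q,t}_{\mu,\nu}(\operatorname{supp}\mu\cap\operatorname{supp}\nu)$. $E_{\mu,\nu}(\alpha,\beta)=\{x\in\operatorname{supp}\mu\cap\operatorname{supp}\nu:\lim_{r\to0}\frac{\log\mu(B(x,r))}{\log r}=\alpha,\ \lim_{r\to0}\frac{\log\nu(B(x,r))}{\log r}=\beta\}$. *)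

theory Defs
  imports "HOL-Probability.Probability"
begin

definition msupp :: "'a::euclidean_space measure \<Rightarrow> 'a set" where
  "msupp \<mu> = {x. \<forall>r>0. 0 < emeasure \<mu> (ball x r)}"

definition Eset :: "'a::euclidean_space measure \<Rightarrow> 'a measure \<Rightarrow> real \<Rightarrow> real \<Rightarrow> 'a set" where
  "Eset \<mu> \<nu> \<alpha> \<beta> = {x \<in> msupp \<mu> \<inter> msupp \<nu>.
      ((\<lambda>r. ln (measure \<mu> (cball x r)) / ln r) \<longlongrightarrow> \<alpha>) (at_right 0) \<and>
      ((\<lambda>r. ln (measure \<nu> (cball x r)) / ln r) \<longlongrightarrow> \<beta>) (at_right 0)}"

definition hpow :: "real \<Rightarrow> real \<Rightarrow> ennreal" where
  "hpow d s = (if d = 0 then (if s = 0 then 1 else if s > 0 then 0 else \<infinity>) else ennreal (d powr s))"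

definition hausdorff_delta :: "real \<Rightarrow> real \<Rightarrow> 'a::euclidean_space set \<Rightarrow> ennreal" where
  "hausdorff_delta s \<delta> E = (INF U \<in> {U :: nat \<Rightarrow> 'a set. E \<subseteq> (\<Union>i. U i) \<and>
        (\<forall>i. bounded (U i) \<and> diameter (U i) \<le> \<delta>)}.
        (\<Sum>i. if U i = {} then 0 else hpow (diameter (U i)) s))"

definition hausdorff_measure :: "real \<Rightarrow> 'a::euclidean_space set \<Rightarrow> ennreal" where
  "hausdorff_measure s E = (SUP \<delta> \<in> {0<..}. hausdorff_delta s \<delta> E)"

definition mpow :: "real \<Rightarrow> real \<Rightarrow> ennreal" where
  "mpow a q = (if a = 0 then (if q \<le> 0 then \<infinity> else 0) else ennreal (a powr q))"

definition ball_term :: "'a::euclidean_space measure \<Rightarrow> 'a measure \<Rightarrow> real \<Rightarrow> real \<Rightarrow> real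
    \<Rightarrow> 'a \<times> real \<Rightarrow> ennreal" where
  "ball_term \<mu> \<nu> q t s p = mpow (measure \<mu> (cball (fst p) (snd p))) q
      * mpow (measure \<nu> (cball (fst p) (snd p))) t * ennreal ((2 * snd p) powr s)"

text \<open>Centered \<delta>-packings / coverings, as countable sets of (center, radius) pairs.\<close>
definition centered_packing :: "'a::euclidean_space set \<Rightarrow> real \<Rightarrow> ('a \<times> real) set \<Rightarrow> bool" where
  "centered_packing E \<delta> P \<longleftrightarrow> countable P \<and>
     (\<forall>p\<in>P. fst p \<in> E \<and> 0 < snd p \<and> snd p \<le> \<delta>) \<and>
     (\<forall>p\<in>P. \<forall>p'\<in>P. p \<noteq> p' \<longrightarrow> cball (fst p) (snd p) \<inter> cball (fst p') (snd p') = {})"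

definition centered_covering :: "'a::euclidean_space set \<Rightarrow> real \<Rightarrow> ('a \<times> real) set \<Rightarrow> bool" where
  "centered_covering E \<delta> C \<longleftrightarrow> countable C \<and>
     (\<forall>p\<in>C. fst p \<in> E \<and> 0 < snd p \<and> snd p \<le> \<delta>) \<and>
     E \<subseteq> (\<Union>p\<in>C. cball (fst p) (snd p))"

definition Pbar_delta :: "'a::euclidean_space measure \<Rightarrow> 'a measure \<Rightarrow> real \<Rightarrow> real \<Rightarrow> real
    \<Rightarrow> real \<Rightarrow> 'a set \<Rightarrow> ennreal" where
  "Pbar_delta \<mu> \<nu> q t s \<delta> E =
     (SUP P \<in> {P. centered_packing E \<delta> P}. infsum (ball_term \<mu> \<nu> q t s) P)"

definition Pbar :: "'a::euclidean_space measure \<Rightarrow> 'a measure \<Rightarrow> real \<Rightarrow> real \<Rightarrow> real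
    \<Rightarrow> 'a set \<Rightarrow> ennreal" where
  "Pbar \<mu> \<nu> q t s E = (INF \<delta> \<in> {0<..}. Pbar_delta \<mu> \<nu> q t s \<delta> E)"

definition Pmeas :: "'a::euclidean_space measure \<Rightarrow> 'a measure \<Rightarrow> real \<Rightarrow> real \<Rightarrow> real
    \<Rightarrow> 'a set \<Rightarrow> ennreal" where
  "Pmeas \<mu> \<nu> q t s E =
     (INF Es \<in> {Es :: nat \<Rightarrow> 'a set. E \<subseteq> (\<Union>i. Es i)}. (\<Sum>i. Pbar \<mu> \<nu> q t s (Es i)))"

definition Hbar_delta :: "'a::euclidean_space measure \<Rightarrow> 'a measure \<Rightarrow> real \<Rightarrow> real \<Rightarrow> real
    \<Rightarrow> real \<Rightarrow> 'a set \<Rightarrow> ennreal" where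
  "Hbar_delta \<mu> \<nu> q t s \<delta> E =
     (INF C \<in> {C. centered_covering E \<delta> C}. infsum (ball_term \<mu> \<nu> q t s) C)"

definition Hbar :: "'a::euclidean_space measure \<Rightarrow> 'a measure \<Rightarrow> real \<Rightarrow> real \<Rightarrow> real
    \<Rightarrow> 'a set \<Rightarrow> ennreal" where
  "Hbar \<mu> \<nu> q t s E = (SUP \<delta> \<in> {0<..}. Hbar_delta \<mu> \<nu> q t s \<delta> E)"

definition Hmeas :: "'a::euclidean_space measure \<Rightarrow> 'a measure \<Rightarrow> real \<Rightarrow> real \<Rightarrow> real
    \<Rightarrow> 'a set \<Rightarrow> ennreal" where
  "Hmeas \<mu> \<nu> q t s E = (SUP F \<in> Pow E. Hbar \<mu> \<nu> q t s F)"

text \<open>The critical exponent where s \<mapsto> Pmeas ... s E jumps from \<infinity> to 0.\<close>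
definition Bdim :: "'a::euclidean_space measure \<Rightarrow> 'a measure \<Rightarrow> real \<Rightarrow> real \<Rightarrow> 'a set \<Rightarrow> ereal" where
  "Bdim \<mu> \<nu> q t E = Inf {ereal s | s. Pmeas \<mu> \<nu> q t s E = 0}"

definition Bfun :: "'a::euclidean_space measure \<Rightarrow> 'a measure \<Rightarrow> real \<times> real \<Rightarrow> ereal" where
  "Bfun \<mu> \<nu> qt = Bdim \<mu> \<nu> (fst qt) (snd qt) (msupp \<mu> \<inter> msupp \<nu>)"

end

theory Submission
  imports Defs
begin

text \<open>
  At each point of \<open>E = E(\<alpha>, \<beta>)\<close> the local dimensions give
  \<open>\<mu>(B(x,r))^q \<nu>(B(x,r))^t (2r)^B \<le> 2^B r^(s + \<eta>\<^sub>2)\<close> for all small \<open>r\<close>, where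
  \<open>s = \<alpha>q + \<beta>t + B - \<eta>\<^sub>1 - \<eta>\<^sub>2\<close> is the Hausdorff exponent on the left-hand side.
  Split \<open>E\<close> into countably many strata according to the scale below which this bound holds.
  On a stratum, a \<open>\<delta>\<close>-cover by sets \<open>U\<^sub>i\<close> yields a centered cover by balls of radius
  \<open>diam U\<^sub>i\<close> whose mixed cost is at most \<open>2^B \<delta>^\<eta>\<^sub>2\<close> times the \<open>H^s\<close>-cost (up to a
  geometric error term). Hence if \<open>H^s(E) < \<infinity>\<close>, the mixed Hausdorff measure vanishes on
  every subset of every stratum, and by countable subadditivity on every subset of \<open>E\<close>.
  So either the left-hand side is infinite or the right-hand side is zero.
\<close>

lemma infsum_image_le_suminf:
  fixes g :: "'b \<Rightarrow> ennreal" and h :: "nat \<Rightarrow> 'b"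
  shows "infsum g (h ` I) \<le> (\<Sum>i. if i \<in> I then g (h i) else 0)"
proof (rule infsum_le_finite_sums)
  fix F assume "finite F" "F \<subseteq> h ` I"
  then obtain J where J: "J \<subseteq> I" "finite J" "F = h ` J"
    by (meson finite_subset_image)
  have "sum g F \<le> sum (g \<circ> h) J"
    using J sum_image_le[of J g h] by simp
  also have "\<dots> = (\<Sum>i\<in>J. if i \<in> I then g (h i) else 0)"
    using J by (intro sum.cong) auto
  also have "\<dots> \<le> (\<Sum>i. if i \<in> I then g (h i) else 0)"
    by (rule sum_le_suminf) (auto simp: J)
  finally show "sum g F \<le> (\<Sum>i. if i \<in> I then g (h i) else 0)" .
qed (simp add: nonneg_summable_on_complete)

lemma infsum_UN_le_suminf:
  fixes g :: "'b \<Rightarrow> ennreal" and C :: "nat \<Rightarrow> 'b set"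
  shows "infsum g (\<Union>k. C k) \<le> (\<Sum>k. infsum g (C k))"
proof (rule infsum_le_finite_sums)
  fix F assume F: "finite F" "F \<subseteq> (\<Union>k. C k)"
  define k where "k x = (SOME k. x \<in> C k)" for x
  have k: "x \<in> C (k x)" if "x \<in> F" for x
    using F that unfolding k_def by (metis UN_E someI_ex subsetD)
  have "sum g F = (\<Sum>j\<in>k ` F. sum g {x\<in>F. k x = j})"
    by (rule sum.image_gen) (rule F)
  also have "\<dots> \<le> (\<Sum>j\<in>k ` F. infsum g (C j))"
  proof (rule sum_mono)
    fix j
    have "sum g {x\<in>F. k x = j} = infsum g {x\<in>F. k x = j}"
      using F by simp
    also have "\<dots> \<le> infsum g (C j)"
      using k by (intro infsum_mono_neutral) (auto simp: nonneg_summable_on_complete)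
    finally show "sum g {x\<in>F. k x = j} \<le> infsum g (C j)" .
  qed
  also have "\<dots> \<le> (\<Sum>j. infsum g (C j))"
    by (rule sum_le_suminf) (auto simp: F)
  finally show "sum g F \<le> (\<Sum>j. infsum g (C j))" .
qed (simp add: nonneg_summable_on_complete)

lemma measure_cball_pos_of_msupp:
  assumes "finite_measure \<mu>" "sets \<mu> = sets borel" "x \<in> msupp \<mu>" "0 < r"
  shows "0 < measure \<mu> (cball x r)"
proof -
  have "0 < emeasure \<mu> (ball x r)"
    using assms(3,4) unfolding msupp_def by auto
  also have "\<dots> \<le> emeasure \<mu> (cball x r)"
    using assms(2) by (intro emeasure_mono) auto
  finally show ?thesis
    using finite_measure.emeasure_eq_measure[OF assms(1)] by simp
qed

lemma hausdorff_measure_mono: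
  assumes "A \<subseteq> B"
  shows "hausdorff_measure s A \<le> hausdorff_measure s B"
  unfolding hausdorff_measure_def hausdorff_delta_def
  by (intro SUP_mono' INF_superset_mono) (use assms in auto)

lemma Hbar_delta_antimono:
  assumes "\<delta>\<^sub>1 \<le> \<delta>\<^sub>2"
  shows "Hbar_delta \<mu> \<nu> q t s \<delta>\<^sub>2 E \<le> Hbar_delta \<mu> \<nu> q t s \<delta>\<^sub>1 E"
  unfolding Hbar_delta_def
  by (rule INF_superset_mono) (use assms in \<open>fastforce simp: centered_covering_def\<close>, simp)

lemma centered_covering_UN:
  fixes A :: "nat \<Rightarrow> 'a::euclidean_space set"
  assumes "\<And>k. centered_covering (A k) \<delta> (C k)"
  shows "centered_covering (\<Union>k. A k) \<delta> (\<Union>k. C k)"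
proof -
  have C: "countable (C k)" "\<forall>p\<in>C k. fst p \<in> A k \<and> 0 < snd p \<and> snd p \<le> \<delta>"
    "A k \<subseteq> (\<Union>p\<in>C k. cball (fst p) (snd p))" for k
    using assms[of k] unfolding centered_covering_def by auto
  have "(\<Union>k. A k) \<subseteq> (\<Union>p\<in>(\<Union>k. C k). cball (fst p) (snd p))"
    using C(3) by blast
  moreover have "countable (\<Union>k. C k)"
    using C(1) by (intro countable_UN) auto
  moreover have "\<forall>p\<in>(\<Union>k. C k). fst p \<in> (\<Union>k. A k) \<and> 0 < snd p \<and> snd p \<le> \<delta>"
    using C(2) by blast
  ultimately show ?thesis
    unfolding centered_covering_def by blast
qed

lemma Hbar_delta_UN_le:
  "Hbar_delta \<mu> \<nu> q t s \<delta> (\<Union>k. A k) \<le> (\<Sum>k. Hbar_delta \<mu> \<nu> q t s \<delta> (A k))"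
proof (rule ennreal_le_epsilon)
  fix e :: real assume fin: "(\<Sum>k. Hbar_delta \<mu> \<nu> q t s \<delta> (A k)) < top" and "0 < e"
  define e' where "e' k = ennreal (e * (1/2) ^ Suc k)" for k
  have "\<exists>C. centered_covering (A k) \<delta> C \<and>
      infsum (ball_term \<mu> \<nu> q t s) C < Hbar_delta \<mu> \<nu> q t s \<delta> (A k) + e' k" for k
  proof -
    have "Hbar_delta \<mu> \<nu> q t s \<delta> (A k) < top"
      using fin by (rule ennreal_suminf_lessD)
    then have "Hbar_delta \<mu> \<nu> q t s \<delta> (A k) < Hbar_delta \<mu> \<nu> q t s \<delta> (A k) + e' k"
      using \<open>0 < e\<close> by (simp add: e'_def ennreal_add_left_cancel_less[where c = 0, simplified])
    then show ?thesis
      unfolding Hbar_delta_def[of _ _ _ _ _ _ "A k"] INF_less_iff by auto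
  qed
  then obtain C where C: "\<And>k. centered_covering (A k) \<delta> (C k)"
    "\<And>k. infsum (ball_term \<mu> \<nu> q t s) (C k) < Hbar_delta \<mu> \<nu> q t s \<delta> (A k) + e' k"
    by metis
  have "Hbar_delta \<mu> \<nu> q t s \<delta> (\<Union>k. A k) \<le> infsum (ball_term \<mu> \<nu> q t s) (\<Union>k. C k)"
    unfolding Hbar_delta_def by (rule INF_lower) (simp add: centered_covering_UN C(1))
  also have "\<dots> \<le> (\<Sum>k. infsum (ball_term \<mu> \<nu> q t s) (C k))"
    by (rule infsum_UN_le_suminf)
  also have "\<dots> \<le> (\<Sum>k. Hbar_delta \<mu> \<nu> q t s \<delta> (A k) + e' k)"
    by (intro suminf_le less_imp_le C(2)) auto
  also have "\<dots> = (\<Sum>k. Hbar_delta \<mu> \<nu> q t s \<delta> (A k)) + (\<Sum>k. e' k)"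
    by (rule suminf_add[symmetric]) auto
  also have "(\<Sum>k. e' k) = ennreal e"
  proof -
    have "(\<lambda>k. e * (1/2) ^ Suc k) sums e"
      using sums_mult[OF power_half_series, of e] by simp
    then show ?thesis
      unfolding e'_def using \<open>0 < e\<close> by (simp add: suminf_ennreal2 sums_iff sums_summable)
  qed
  finally show "Hbar_delta \<mu> \<nu> q t s \<delta> (\<Union>k. A k)
      \<le> (\<Sum>k. Hbar_delta \<mu> \<nu> q t s \<delta> (A k)) + ennreal e" .
qed

lemma Hbar_UN_le: "Hbar \<mu> \<nu> q t s (\<Union>k. A k) \<le> (\<Sum>k. Hbar \<mu> \<nu> q t s (A k))"
  unfolding Hbar_def
proof (rule SUP_least)
  fix \<delta> :: real assume "\<delta> \<in> {0<..}"
  then have "Hbar_delta \<mu> \<nu> q t s \<delta> (A k) \<le> (SUP \<delta>\<in>{0<..}. Hbar_delta \<mu> \<nu> q t s \<delta> (A k))" for k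
    by (rule SUP_upper)
  then show "Hbar_delta \<mu> \<nu> q t s \<delta> (\<Union>k. A k) \<le> (\<Sum>k. SUP \<delta>\<in>{0<..}. Hbar_delta \<mu> \<nu> q t s \<delta> (A k))"
    by (intro order_trans[OF Hbar_delta_UN_le] suminf_le) auto
qed

lemma Eset_eventually_ball_term_le:
  assumes \<mu>: "finite_measure \<mu>" "sets \<mu> = sets borel"
    and \<nu>: "finite_measure \<nu>" "sets \<nu> = sets borel"
    and x: "x \<in> Eset \<mu> \<nu> \<alpha> \<beta>" and "0 < \<eta>"
  shows "\<forall>\<^sub>F r in at_right 0.
    ball_term \<mu> \<nu> q t B (x, r) \<le> ennreal (2 powr B * r powr (\<alpha> * q + \<beta> * t + B - \<eta>))"
proof -
  define m where "m r = measure \<mu> (cball x r)" for r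
  define n where "n r = measure \<nu> (cball x r)" for r
  have "((\<lambda>r. ln (m r) / ln r) \<longlongrightarrow> \<alpha>) (at_right 0)" "((\<lambda>r. ln (n r) / ln r) \<longlongrightarrow> \<beta>) (at_right 0)"
    using x unfolding Eset_def m_def n_def by auto
  then have "((\<lambda>r. q * (ln (m r) / ln r) + t * (ln (n r) / ln r)) \<longlongrightarrow> q * \<alpha> + t * \<beta>) (at_right 0)"
    by (intro tendsto_intros)
  then have "\<forall>\<^sub>F r in at_right 0. \<alpha> * q + \<beta> * t - \<eta> < q * (ln (m r) / ln r) + t * (ln (n r) / ln r)"
    by (rule order_tendstoD) (use \<open>0 < \<eta>\<close> in \<open>simp add: mult.commute\<close>)
  moreover have "\<forall>\<^sub>F r in at_right 0. 0 < r \<and> r < (1::real)"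
    by (auto simp: eventually_at_right_field intro: exI[of _ 1])
  ultimately show ?thesis
  proof eventually_elim
    case (elim r)
    then have "ln r < 0" by simp
    have m: "0 < m r" and n: "0 < n r"
      using x elim measure_cball_pos_of_msupp[OF \<mu>] measure_cball_pos_of_msupp[OF \<nu>]
      by (auto simp: Eset_def m_def n_def)
    have "q * (ln (m r) / ln r) + t * (ln (n r) / ln r) = (q * ln (m r) + t * ln (n r)) / ln r"
      by (simp add: add_divide_distrib)
    with elim \<open>ln r < 0\<close> have "q * ln (m r) + t * ln (n r) < (\<alpha> * q + \<beta> * t - \<eta>) * ln r"
      by (simp add: less_divide_eq)
    then have "m r powr q * n r powr t \<le> r powr (\<alpha> * q + \<beta> * t - \<eta>)"
      using m n elim by (simp add: powr_def exp_add[symmetric] mult.commute)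
    then have "m r powr q * n r powr t * (2 * r) powr B \<le> r powr (\<alpha> * q + \<beta> * t - \<eta>) * (2 * r) powr B"
      by (rule mult_right_mono) simp
    also have "\<dots> = 2 powr B * r powr (\<alpha> * q + \<beta> * t + B - \<eta>)"
      using elim by (simp add: powr_mult powr_add[symmetric] algebra_simps)
    finally show ?case
      using m n by (simp add: ball_term_def mpow_def m_def n_def ennreal_mult[symmetric])
  qed
qed

lemma centered_covering_from_cover:
  fixes U :: "nat \<Rightarrow> 'a::euclidean_space set"
  assumes "G \<subseteq> (\<Union>i. U i)" "\<And>i. bounded (U i)"
    and "\<And>i. 0 < r i" "\<And>i. r i \<le> \<delta>" "\<And>i. diameter (U i) \<le> r i"
  obtains x where "centered_covering G \<delta> ((\<lambda>i. (x i, r i)) ` {i. U i \<inter> G \<noteq> {}})"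
proof
  define x where "x i = (SOME x. x \<in> U i \<inter> G)" for i
  have x: "x i \<in> U i \<inter> G" if "U i \<inter> G \<noteq> {}" for i
    using that someI_ex[of "\<lambda>x. x \<in> U i \<inter> G"] unfolding x_def by auto
  have "g \<in> cball (x i) (r i)" if "g \<in> U i" "g \<in> G" for g i
  proof -
    have "dist (x i) g \<le> diameter (U i)"
      using x[of i] that assms(2) by (intro diameter_bounded_bound) auto
    then show ?thesis using assms(5)[of i] by simp
  qed
  then have "G \<subseteq> (\<Union>i\<in>{i. U i \<inter> G \<noteq> {}}. cball (x i) (r i))"
    using assms(1) by blast
  then show "centered_covering G \<delta> ((\<lambda>i. (x i, r i)) ` {i. U i \<inter> G \<noteq> {}})"
    using x assms(3,4) unfolding centered_covering_def by auto
qed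

lemma half_power_powr: "((1/2::real) ^ i) powr \<eta> = ((1/2) powr \<eta>) ^ i"
proof -
  have "((1/2::real) ^ i) powr \<eta> = ((1/2) powr real i) powr \<eta>"
    by (simp add: powr_realpow)
  also have "\<dots> = ((1/2) powr \<eta>) powr real i"
    by (simp add: powr_powr mult.commute)
  also have "\<dots> = ((1/2) powr \<eta>) ^ i"
    by (simp add: powr_realpow)
  finally show ?thesis .
qed

lemma covering_radius_cost_le:
  fixes c d \<delta> s \<eta> :: real
  assumes "0 \<le> d" "d \<le> \<delta>" "\<delta> \<le> 1" "0 < c" "0 < \<delta>" "0 < \<eta>"
    and r: "r = (if 0 < d then d else \<delta> * (1/2) ^ i)"
  shows "ennreal (c * r powr (s + \<eta>))
    \<le> ennreal (c * \<delta> powr \<eta>) * (hpow d s + ennreal (((1/2) powr \<eta>) ^ i))"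
proof -
  consider "0 < d" | "d = 0" "0 \<le> s" | "d = 0" "s < 0"
    using assms(1) by linarith
  then show ?thesis
  proof cases
    case 1
    have "c * d powr (s + \<eta>) = c * d powr \<eta> * d powr s"
      by (simp add: powr_add)
    also have "\<dots> \<le> c * \<delta> powr \<eta> * d powr s"
      using 1 assms by (intro mult_right_mono mult_left_mono powr_mono2) auto
    finally have "ennreal (c * r powr (s + \<eta>)) \<le> ennreal (c * \<delta> powr \<eta>) * hpow d s"
      using 1 assms by (simp add: r hpow_def ennreal_mult[symmetric] ennreal_leI)
    also have "\<dots> \<le> ennreal (c * \<delta> powr \<eta>) * (hpow d s + ennreal (((1/2) powr \<eta>) ^ i))"
      by (intro mult_left_mono) auto
    finally show ?thesis .
  next
    case 2
    then have r: "r = \<delta> * (1/2) ^ i"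
      by (simp add: r)
    have "0 < r" "r \<le> 1"
      using assms by (auto simp: r intro!: mult_le_one power_le_one)
    have "c * r powr (s + \<eta>) = c * (r powr s * r powr \<eta>)"
      by (simp add: powr_add)
    also have "\<dots> \<le> c * (1 * r powr \<eta>)"
      using 2 \<open>0 < r\<close> \<open>r \<le> 1\<close> \<open>0 < c\<close>
      by (intro mult_left_mono mult_right_mono powr_le1) auto
    also have "\<dots> = c * \<delta> powr \<eta> * ((1/2) powr \<eta>) ^ i"
      using \<open>0 < \<delta>\<close> by (simp add: r powr_mult half_power_powr)
    finally have "ennreal (c * r powr (s + \<eta>)) \<le> ennreal (c * \<delta> powr \<eta>) * ennreal (((1/2) powr \<eta>) ^ i)"
      using \<open>0 < c\<close> by (simp add: ennreal_mult[symmetric] ennreal_leI)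
    also have "\<dots> \<le> ennreal (c * \<delta> powr \<eta>) * (hpow d s + ennreal (((1/2) powr \<eta>) ^ i))"
      by (intro mult_left_mono) auto
    finally show ?thesis .
  next
    case 3
    then show ?thesis
      using assms by (simp add: hpow_def ennreal_mult_top)
  qed
qed

lemma Hbar_delta_le_hausdorff_cover:
  fixes G :: "'a::euclidean_space set"
  assumes bound: "\<And>x r. x \<in> G \<Longrightarrow> 0 < r \<Longrightarrow> r \<le> \<delta> \<Longrightarrow>
      ball_term \<mu> \<nu> q t B (x, r) \<le> ennreal (c * r powr (s + \<eta>))"
    and "0 < c" "0 < \<eta>" "0 < \<delta>" "\<delta> \<le> 1"
    and U: "G \<subseteq> (\<Union>i. U i)" "\<And>i. bounded (U i)" "\<And>i. diameter (U i) \<le> \<delta>"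
  shows "Hbar_delta \<mu> \<nu> q t B \<delta> G \<le> ennreal (c * \<delta> powr \<eta>) *
    ((\<Sum>i. if U i = {} then 0 else hpow (diameter (U i)) s) + ennreal (1 / (1 - (1/2) powr \<eta>)))"
proof -
  define y where "y = (1/2::real) powr \<eta>"
  have y: "0 < y" "y < 1"
    using powr_less_mono2[OF \<open>0 < \<eta>\<close>, of "1/2" 1] by (auto simp: y_def)
  \<comment> \<open>A set of diameter 0 may cost nothing in \<open>H^s\<close>, so it gets the radius \<open>\<delta> / 2^i\<close>;
      these balls cost at most a geometric series.\<close>
  define r where "r i = (if 0 < diameter (U i) then diameter (U i) else \<delta> * (1/2) ^ i)" for i
  have r: "0 < r i" "r i \<le> \<delta>" "diameter (U i) \<le> r i" for i
    using U(3)[of i] diameter_ge_0[OF U(2), of i] \<open>0 < \<delta>\<close>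
    by (auto simp: r_def mult_le_cancel_left1 power_le_one)
  define I where "I = {i. U i \<inter> G \<noteq> {}}"
  obtain x where cov: "centered_covering G \<delta> ((\<lambda>i. (x i, r i)) ` I)"
    using centered_covering_from_cover[OF U(1,2) r, folded I_def] .
  then have x: "x i \<in> G" if "i \<in> I" for i
    using that unfolding centered_covering_def by auto
  define cost where "cost i = (if U i = {} then 0 else hpow (diameter (U i)) s)" for i
  have term_le: "(if i \<in> I then ball_term \<mu> \<nu> q t B (x i, r i) else 0)
      \<le> ennreal (c * \<delta> powr \<eta>) * (cost i + ennreal (y ^ i))" for i
  proof (cases "i \<in> I")
    case True
    then have cost: "cost i = hpow (diameter (U i)) s"
      by (auto simp: cost_def I_def)
    have "ball_term \<mu> \<nu> q t B (x i, r i) \<le> ennreal (c * r i powr (s + \<eta>))"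
      using bound[OF x[OF True] r(1,2)] .
    also have "\<dots> \<le> ennreal (c * \<delta> powr \<eta>) * (cost i + ennreal (y ^ i))"
      unfolding cost y_def
      by (rule covering_radius_cost_le[OF diameter_ge_0[OF U(2)] U(3) \<open>\<delta> \<le> 1\<close> \<open>0 < c\<close> \<open>0 < \<delta>\<close> \<open>0 < \<eta>\<close> r_def])
    finally show ?thesis
      using True by simp
  qed simp
  have "Hbar_delta \<mu> \<nu> q t B \<delta> G \<le> infsum (ball_term \<mu> \<nu> q t B) ((\<lambda>i. (x i, r i)) ` I)"
    unfolding Hbar_delta_def by (rule INF_lower) (simp add: cov)
  also have "\<dots> \<le> (\<Sum>i. if i \<in> I then ball_term \<mu> \<nu> q t B (x i, r i) else 0)"
    by (rule infsum_image_le_suminf)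
  also have "\<dots> \<le> (\<Sum>i. ennreal (c * \<delta> powr \<eta>) * (cost i + ennreal (y ^ i)))"
    by (intro suminf_le term_le) auto
  also have "\<dots> = ennreal (c * \<delta> powr \<eta>) * ((\<Sum>i. cost i) + (\<Sum>i. ennreal (y ^ i)))"
    by (simp add: suminf_add)
  also have "(\<Sum>i. ennreal (y ^ i)) = ennreal (1 / (1 - y))"
    using y by (simp add: suminf_ennreal2 summable_geometric suminf_geometric)
  finally show ?thesis
    by (simp add: cost_def y_def)
qed

lemma Hbar_delta_le_of_hausdorff_measure_less:
  fixes G :: "'a::euclidean_space set"
  assumes bound: "\<And>x r. x \<in> G \<Longrightarrow> 0 < r \<Longrightarrow> r \<le> \<delta> \<Longrightarrow>
      ball_term \<mu> \<nu> q t B (x, r) \<le> ennreal (c * r powr (s + \<eta>))"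
    and "0 < c" "0 < \<eta>" "0 < \<delta>" "\<delta> \<le> 1"
    and M: "hausdorff_measure s G < ennreal M" "0 \<le> M"
  shows "Hbar_delta \<mu> \<nu> q t B \<delta> G \<le> ennreal (c * \<delta> powr \<eta> * (M + 1 / (1 - (1/2) powr \<eta>)))"
proof -
  have "hausdorff_delta s \<delta> G \<le> hausdorff_measure s G"
    unfolding hausdorff_measure_def by (rule SUP_upper) (simp add: \<open>0 < \<delta>\<close>)
  then have "hausdorff_delta s \<delta> G < ennreal M"
    using M(1) by (rule le_less_trans)
  then obtain U where U: "G \<subseteq> (\<Union>i. U i)" "\<And>i. bounded (U i)" "\<And>i. diameter (U i) \<le> \<delta>"
    and sum_U: "(\<Sum>i. if U i = {} then 0 else hpow (diameter (U i)) s) < ennreal M"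
    unfolding hausdorff_delta_def INF_less_iff by auto
  have "(1/2::real) powr \<eta> < 1"
    using powr_less_mono2[OF \<open>0 < \<eta>\<close>, of "1/2" 1] by simp
  have "Hbar_delta \<mu> \<nu> q t B \<delta> G \<le> ennreal (c * \<delta> powr \<eta>) *
      ((\<Sum>i. if U i = {} then 0 else hpow (diameter (U i)) s) + ennreal (1 / (1 - (1/2) powr \<eta>)))"
    by (rule Hbar_delta_le_hausdorff_cover[OF bound assms(2-5) U])
  also have "\<dots> \<le> ennreal (c * \<delta> powr \<eta>) * (ennreal M + ennreal (1 / (1 - (1/2) powr \<eta>)))"
    using sum_U by (intro mult_left_mono add_right_mono) auto
  also have "\<dots> = ennreal (c * \<delta> powr \<eta> * (M + 1 / (1 - (1/2) powr \<eta>)))"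
    using M(2) \<open>(1/2::real) powr \<eta> < 1\<close> \<open>0 < c\<close>
    by (simp add: ennreal_mult[symmetric] ennreal_plus[symmetric] del: ennreal_plus)
  finally show ?thesis .
qed

lemma Hbar_le_if_Hbar_delta_le:
  assumes "0 < \<delta>\<^sub>0" and "\<And>\<delta>. 0 < \<delta> \<Longrightarrow> \<delta> \<le> \<delta>\<^sub>0 \<Longrightarrow> Hbar_delta \<mu> \<nu> q t s \<delta> E \<le> b"
  shows "Hbar \<mu> \<nu> q t s E \<le> b"
  unfolding Hbar_def
proof (rule SUP_least)
  fix \<delta> :: real assume "\<delta> \<in> {0<..}"
  then have "Hbar_delta \<mu> \<nu> q t s \<delta> E \<le> Hbar_delta \<mu> \<nu> q t s (min \<delta> \<delta>\<^sub>0) E"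
    by (intro Hbar_delta_antimono) simp
  also have "\<dots> \<le> b"
    using assms \<open>\<delta> \<in> {0<..}\<close> by simp
  finally show "Hbar_delta \<mu> \<nu> q t s \<delta> E \<le> b" .
qed

lemma Hbar_eq_0_of_ball_term_le:
  fixes G :: "'a::euclidean_space set"
  assumes bound: "\<And>x r. x \<in> G \<Longrightarrow> 0 < r \<Longrightarrow> r < \<rho> \<Longrightarrow>
      ball_term \<mu> \<nu> q t B (x, r) \<le> ennreal (c * r powr (s + \<eta>))"
    and "0 < c" "0 < \<eta>" "0 < \<rho>" and fin: "hausdorff_measure s G \<noteq> \<infinity>"
  shows "Hbar \<mu> \<nu> q t B G = 0"
proof -
  define M where "M = enn2real (hausdorff_measure s G) + 1"
  have M: "hausdorff_measure s G < ennreal M" "0 \<le> M"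
    using fin by (auto simp: M_def less_top ennreal_enn2real_if ennreal_lessI)
  define K where "K = M + 1 / (1 - (1/2::real) powr \<eta>)"
  have "(1/2::real) powr \<eta> < 1"
    using powr_less_mono2[OF \<open>0 < \<eta>\<close>, of "1/2" 1] by simp
  then have "0 \<le> K"
    using M by (simp add: K_def)
  have "Hbar \<mu> \<nu> q t B G \<le> ennreal (c * \<delta> powr \<eta> * K)" if "0 < \<delta>" "\<delta> < \<rho>" "\<delta> \<le> 1" for \<delta>
  proof (rule Hbar_le_if_Hbar_delta_le[OF \<open>0 < \<delta>\<close>])
    fix \<delta>' :: real assume "0 < \<delta>'" "\<delta>' \<le> \<delta>"
    then have "Hbar_delta \<mu> \<nu> q t B \<delta>' G \<le> ennreal (c * \<delta>' powr \<eta> * K)"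
      unfolding K_def using that assms M
      by (intro Hbar_delta_le_of_hausdorff_measure_less bound) auto
    also have "\<dots> \<le> ennreal (c * \<delta> powr \<eta> * K)"
      using \<open>0 < \<delta>'\<close> \<open>\<delta>' \<le> \<delta>\<close> \<open>0 < c\<close> \<open>0 \<le> K\<close> \<open>0 < \<eta>\<close>
      by (intro ennreal_leI mult_right_mono mult_left_mono powr_mono2) auto
    finally show "Hbar_delta \<mu> \<nu> q t B \<delta>' G \<le> ennreal (c * \<delta> powr \<eta> * K)" .
  qed
  then have "\<forall>\<^sub>F \<delta> in at_right 0. Hbar \<mu> \<nu> q t B G \<le> ennreal (c * \<delta> powr \<eta> * K)"
    using \<open>0 < \<rho>\<close> unfolding eventually_at_right_field
    by (intro exI[of _ "min \<rho> 1"]) auto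
  moreover have "((\<lambda>\<delta>. ennreal (c * \<delta> powr \<eta> * K)) \<longlongrightarrow> ennreal (c * 0 * K)) (at_right 0)"
  proof (intro tendsto_ennrealI tendsto_mult_left tendsto_mult_right)
    show "((\<lambda>\<delta>. \<delta> powr \<eta>) \<longlongrightarrow> 0) (at_right 0)"
      using \<open>0 < \<eta>\<close> eventually_at_right_less[of "0::real"]
      by (intro tendsto_zero_powrI[OF tendsto_ident_at tendsto_const]) (auto elim: eventually_mono)
  qed
  ultimately have "Hbar \<mu> \<nu> q t B G \<le> 0"
    by (intro tendsto_le[OF trivial_limit_at_right_real _ tendsto_const]) simp_all
  then show ?thesis
    by simp
qed

lemma Hmeas_eq_0_of_eventually_ball_term_le:
  fixes E :: "'a::euclidean_space set"
  assumes local: "\<And>x. x \<in> E \<Longrightarrow>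
      \<forall>\<^sub>F r in at_right 0. ball_term \<mu> \<nu> q t B (x, r) \<le> ennreal (c * r powr (s + \<eta>))"
    and "0 < c" "0 < \<eta>" and fin: "hausdorff_measure s E \<noteq> \<infinity>"
  shows "Hmeas \<mu> \<nu> q t B E = 0"
proof -
  define E' where "E' k = {x \<in> E. \<forall>r. 0 < r \<longrightarrow> r < inverse (real (Suc k)) \<longrightarrow>
      ball_term \<mu> \<nu> q t B (x, r) \<le> ennreal (c * r powr (s + \<eta>))}" for k
  have E_cover: "E \<subseteq> (\<Union>k. E' k)"
  proof
    fix x assume "x \<in> E"
    then obtain b where "0 < b" and b: "\<And>r. 0 < r \<Longrightarrow> r < b \<Longrightarrow>
        ball_term \<mu> \<nu> q t B (x, r) \<le> ennreal (c * r powr (s + \<eta>))"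
      using local unfolding eventually_at_right_field by blast
    obtain k where "inverse (real (Suc k)) < b"
      using reals_Archimedean[OF \<open>0 < b\<close>] by blast
    then have "x \<in> E' k"
      using \<open>x \<in> E\<close> unfolding E'_def by (auto intro!: b)
    then show "x \<in> (\<Union>k. E' k)"
      by blast
  qed
  have Hbar_E'_null: "Hbar \<mu> \<nu> q t B (F \<inter> E' k) = 0" if "F \<subseteq> E" for F k
  proof (rule Hbar_eq_0_of_ball_term_le[where \<rho> = "inverse (real (Suc k))" and s = s and c = c and \<eta> = \<eta>])
    have "hausdorff_measure s (F \<inter> E' k) \<le> hausdorff_measure s E"
      using that by (intro hausdorff_measure_mono) auto
    then show "hausdorff_measure s (F \<inter> E' k) \<noteq> \<infinity>"
      using fin by (auto simp: top_unique)
  qed (use assms in \<open>auto simp: E'_def\<close>)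
  have "Hbar \<mu> \<nu> q t B F = 0" if "F \<subseteq> E" for F
  proof -
    have "(\<Union>k. F \<inter> E' k) = F"
      using that E_cover by blast
    moreover have "Hbar \<mu> \<nu> q t B (\<Union>k. F \<inter> E' k) \<le> (\<Sum>k. Hbar \<mu> \<nu> q t B (F \<inter> E' k))"
      by (rule Hbar_UN_le)
    ultimately show ?thesis
      using Hbar_E'_null[OF that] by simp
  qed
  then show ?thesis
    by (simp add: Hmeas_def SUP_constant bot_ennreal)
qed

theorem mainTheorem7:
  fixes \<mu> \<nu> :: "'a::euclidean_space measure"
    and q t \<alpha> \<beta> \<eta>\<^sub>1 \<eta>\<^sub>2 :: real
    and D :: "real \<times> real \<Rightarrow> real"
  assumes "sets \<mu> = sets borel" and "prob_space \<mu>" and "compact (msupp \<mu>)"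
    and "sets \<nu> = sets borel" and "prob_space \<nu>" and "compact (msupp \<nu>)"
    and "\<forall>\<^sub>F p in nhds (q, t). \<bar>Bfun \<mu> \<nu> p\<bar> \<noteq> \<infinity>"
    and "((\<lambda>p. real_of_ereal (Bfun \<mu> \<nu> p)) has_derivative D) (at (q, t))"
    and "\<alpha> = - D (1, 0)" and "\<beta> = - D (0, 1)"
    and "\<eta>\<^sub>1 > 0" and "\<eta>\<^sub>2 > 0"
  shows "hausdorff_measure (\<alpha> * q + \<beta> * t + real_of_ereal (Bfun \<mu> \<nu> (q, t)) - \<eta>\<^sub>1 - \<eta>\<^sub>2)
            (Eset \<mu> \<nu> \<alpha> \<beta>)
         \<ge> ennreal (2 powr (\<alpha> * q + \<beta> * t - \<eta>\<^sub>1 - \<eta>\<^sub>2))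
            * Hmeas \<mu> \<nu> q t (real_of_ereal (Bfun \<mu> \<nu> (q, t))) (Eset \<mu> \<nu> \<alpha> \<beta>)"
proof -
  define B where "B = real_of_ereal (Bfun \<mu> \<nu> (q, t))"
  define s where "s = \<alpha> * q + \<beta> * t + B - \<eta>\<^sub>1 - \<eta>\<^sub>2"
  have "Hmeas \<mu> \<nu> q t B (Eset \<mu> \<nu> \<alpha> \<beta>) = 0" if "hausdorff_measure s (Eset \<mu> \<nu> \<alpha> \<beta>) \<noteq> \<infinity>"
  proof (rule Hmeas_eq_0_of_eventually_ball_term_le[where c = "2 powr B" and s = s and \<eta> = "\<eta>\<^sub>2"])
    fix x assume "x \<in> Eset \<mu> \<nu> \<alpha> \<beta>"
    then show "\<forall>\<^sub>F r in at_right 0. ball_term \<mu> \<nu> q t B (x, r) \<le> ennreal (2 powr B * r powr (s + \<eta>\<^sub>2))"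
      using Eset_eventually_ball_term_le[of \<mu> \<nu> x \<alpha> \<beta> "\<eta>\<^sub>1" q t B] assms(1,2,4,5,11)
      by (simp add: s_def prob_space.finite_measure)
  qed (use that assms(12) in auto)
  then show ?thesis
    by (cases "hausdorff_measure s (Eset \<mu> \<nu> \<alpha> \<beta>) = \<infinity>") (simp_all add: s_def B_def)
qed

end
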